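(* Let $U\subseteq\mathbb C^n$ be an open neighbourhood of $\{z\in\mathbb C^n:\mathrm{Re}\,z_i\ge0\ \forall i\}$ and $f:U\to\mathbb C$ holomorphic. Suppose $f(z)=\mathcal O(e^{c\|z\|_1})$ on $\{\mathrm{Re}\,z\ge0\}$ for some $c<\pi$, where $\|z\|_1=\sum_i|z_i|$, and $f(\lambda)=0$ for all $\lambda\in\Lambda_n^+=\{\lambda\in\mathbb N_0^n:\lambda_1\ge\dots\ge\lambda_n\}$. Then $f\equiv0$. *)

theory Defs
  imports "HOL-Analysis.Analysis"
begin

definition holomorphic_n :: "(complex ^ 'n \<Rightarrow> complex) \<Rightarrow> (complex ^ 'n) set \<Rightarrow> bool" where
  "holomorphic_n f U \<longleftrightarrow>
     (\<forall>z\<in>U. \<exists>L. (f has_derivative L) (at z) \<and> (\<forall>(c::complex) v. L (c *s v) = c * L v))"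

definition closed_orthant :: "(complex ^ 'n) set" where
  "closed_orthant = {z. \<forall>i. 0 \<le> Re (z $ i)}"

definition norm1 :: "complex ^ 'n \<Rightarrow> real" where
  "norm1 z = (\<Sum>i\<in>UNIV. norm (z $ i))"

definition dominant_weights :: "(complex, 'n::{finite,linorder}) vec set" where
  "dominant_weights = {(\<chi> i. of_nat (k $ i)) | k :: (nat, 'n) vec. \<forall>i j. i \<le> j \<longrightarrow> k $ j \<le> k $ i}"

end

theory Submission
  imports Defs "HOL-Complex_Analysis.Complex_Analysis"
begin

text \<open>Restricted to a complex line in one coordinate, \<open>f\<close> becomes a function to which
  Carlson's theorem applies: a function holomorphic on the closed right half-plane, of exponential
  type \<open>c < \<pi>\<close> there and vanishing at all large integers, is zero. Freeing the coordinates one at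
  a time, from the first to the last, while the coordinates still fixed form a dominant weight
  (a large natural value in the first free coordinate keeps them dominant), shows that \<open>f\<close>
  vanishes on the closed orthant; the identity theorem spreads this over the connected component
  of \<open>U\<close>.

  For Carlson's theorem divide by \<open>sin (\<pi> z)\<close>: the quotient \<open>G\<close> decays like
  \<open>exp (c Re z - (\<pi> - c) |Im z|)\<close> on half-integer vertical lines and away from the real axis.
  Phragmen-Lindelof on rectangles then bounds \<open>|G x| exp (-c x) exp (k (x - 1/2)\<^sup>l)\<close> with
  \<open>k = (\<pi> - c) / cos (l \<pi> / 2)\<close> uniformly in \<open>l < 1\<close>; since \<open>k \<rightarrow> \<infinity>\<close> as \<open>l \<rightarrow> 1\<close>,
  \<open>G\<close> vanishes on the real axis.\<close>

section \<open>Dividing by \<open>sin (\<pi> z)\<close>\<close>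

lemma norm_sin_ge_sinh_abs_Im:
  fixes w :: complex
  shows "norm (sin w) \<ge> (exp \<bar>Im w\<bar> - exp (-\<bar>Im w\<bar>)) / 2"
proof -
  have "\<bar>norm (exp (\<i> * w)) - norm (exp (-(\<i> * w)))\<bar> = \<bar>exp (- Im w) - exp (Im w)\<bar>"
    by simp
  also have "\<dots> \<ge> exp \<bar>Im w\<bar> - exp (-\<bar>Im w\<bar>)"
    by (cases "Im w \<ge> 0") (simp_all add: abs_if)
  finally have "exp \<bar>Im w\<bar> - exp (-\<bar>Im w\<bar>) \<le> norm (exp (\<i> * w) - exp (-(\<i> * w)))"
    using norm_triangle_ineq3 order_trans by blast
  moreover have "norm (sin w) = norm (exp (\<i> * w) - exp (-(\<i> * w))) / 2"
    by (simp add: sin_exp_eq norm_divide norm_mult)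
  ultimately show ?thesis by simp
qed

lemma norm_sin_pi_ge_of_abs_Im_ge_1:
  fixes z :: complex
  assumes "\<bar>Im z\<bar> \<ge> 1"
  shows "norm (sin (pi * z)) \<ge> exp (pi * \<bar>Im z\<bar>) / 4"
proof -
  have "1 \<le> pi * \<bar>Im z\<bar>" using assms pi_gt3 mult_mono[of 1 pi 1 "\<bar>Im z\<bar>"] by simp
  then have "2 \<le> exp (pi * \<bar>Im z\<bar>)" using exp_ge_add_one_self[of "pi * \<bar>Im z\<bar>"] by linarith
  then have "2 \<le> exp (pi * \<bar>Im z\<bar>) * exp (pi * \<bar>Im z\<bar>)"
    using mult_mono[of 2 "exp (pi * \<bar>Im z\<bar>)" 1 "exp (pi * \<bar>Im z\<bar>)"] by simp
  then have "exp (-(pi * \<bar>Im z\<bar>)) \<le> exp (pi * \<bar>Im z\<bar>) / 2"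
    by (simp add: exp_minus field_simps)
  moreover have "\<bar>Im (pi * z)\<bar> = pi * \<bar>Im z\<bar>" by (simp add: abs_mult)
  ultimately show ?thesis using norm_sin_ge_sinh_abs_Im[of "pi * z"] by simp
qed

lemma norm_cos_ii_times_of_real:
  fixes t :: real
  shows "norm (cos (\<i> * of_real t)) \<ge> exp \<bar>t\<bar> / 2"
proof -
  have "cos (\<i> * of_real t) = of_real ((exp (-t) + exp t) / 2)"
    by (simp add: cos_exp_eq exp_of_real[symmetric] of_real_exp)
  then have "norm (cos (\<i> * of_real t)) = \<bar>(exp (-t) + exp t) / 2\<bar>"
    by (simp only: norm_of_real)
  then have "norm (cos (\<i> * of_real t)) = (exp (-t) + exp t) / 2"
    by (simp add: add_pos_pos)
  moreover have "exp \<bar>t\<bar> \<le> exp (-t) + exp t" by (cases "t \<ge> 0") auto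
  ultimately show ?thesis by simp
qed

lemma norm_sin_pi_ge_half_integer:
  fixes z :: complex and n :: nat
  assumes "Re z = real n + 1/2"
  shows "norm (sin (pi * z)) \<ge> exp (pi * \<bar>Im z\<bar>) / 2"
proof -
  define a where "a = pi * (real n + 1/2)"
  have z: "pi * z = of_real a + \<i> * of_real (pi * Im z)"
    using assms by (simp add: a_def complex_eq_iff)
  have "sin a = cos (real n * pi)"
    by (simp add: a_def distrib_left sin_add mult.commute)
  then have sin_a: "\<bar>sin a\<bar> = 1" by (simp add: cos_npi)
  have "cos a = 0"
    by (simp add: a_def distrib_left cos_add mult.commute)
  then have "sin (pi * z) = of_real (sin a) * cos (\<i> * of_real (pi * Im z))"
    unfolding z by (simp add: sin_add sin_of_real cos_of_real)
  then have "norm (sin (pi * z)) = norm (cos (\<i> * of_real (pi * Im z)))"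
    by (simp add: norm_mult sin_a)
  then show ?thesis using norm_cos_ii_times_of_real[of "pi * Im z"] by (simp add: abs_mult)
qed

lemma sin_pi_eq_0_iff: "sin (pi * y) = 0 \<longleftrightarrow> (\<exists>m::int. y = of_int m)" for y :: complex
proof
  assume "sin (pi * y) = 0"
  then obtain m :: int where "pi * y = of_real (m * pi)" by (auto simp: sin_eq_0)
  then have "y = of_int m" by (simp add: field_simps)
  then show "\<exists>m::int. y = of_int m" by blast
qed (auto simp: sin_eq_0 mult.commute)

lemma sin_pi_zeros_eq:
  fixes y k :: complex
  assumes "sin (pi * y) = 0" "sin (pi * k) = 0" "norm (y - k) < 1"
  shows "y = k"
proof -
  obtain m n :: int where m: "y = of_int m" and n: "k = of_int n"
    using assms(1,2) by (auto simp: sin_pi_eq_0_iff)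
  have "norm (of_int (m - n) :: complex) < 1" using assms(3) m n by simp
  then have "m = n" by (simp only: norm_of_int)
  then show ?thesis using m n by simp
qed

text \<open>At the zeros of \<open>sin (\<pi> z)\<close> the value is the l'Hopital limit, so the quotient is
  holomorphic as soon as \<open>h\<close> vanishes at the integers.\<close>
definition sin_pi_quotient :: "(complex \<Rightarrow> complex) \<Rightarrow> complex \<Rightarrow> complex" where
  "sin_pi_quotient h z =
     (if sin (of_real pi * z) = 0 then deriv h z / (of_real pi * cos (of_real pi * z))
      else h z / sin (of_real pi * z))"

lemma sin_pi_quotient_tendsto:
  fixes h :: "complex \<Rightarrow> complex" and k :: complex
  assumes "open V" "h holomorphic_on V" "k \<in> V" "sin (pi * k) = 0" "h k = 0"
  shows "(sin_pi_quotient h \<longlongrightarrow> sin_pi_quotient h k) (at k)"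
proof -
  have "(h has_field_derivative deriv h k) (at k)"
    using assms by (simp add: holomorphic_derivI)
  then have dh: "((\<lambda>y. (h y - h k) / (y - k)) \<longlongrightarrow> deriv h k) (at k)"
    by (simp add: has_field_derivative_iff)
  have "((\<lambda>y. sin (pi * y)) has_field_derivative (pi * cos (pi * k))) (at k)"
    by (auto intro!: derivative_eq_intros)
  then have ds: "((\<lambda>y. (sin (pi * y) - sin (pi * k)) / (y - k)) \<longlongrightarrow> pi * cos (pi * k)) (at k)"
    by (simp add: has_field_derivative_iff)
  have "cos (pi * k) \<noteq> 0"
    using sin_cos_squared_add[of "pi * k"] assms(4) by auto
  then have lim: "((\<lambda>y. ((h y - h k) / (y - k)) / ((sin (pi * y) - sin (pi * k)) / (y - k)))
            \<longlongrightarrow> sin_pi_quotient h k) (at k)"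
    using tendsto_divide[OF dh ds] assms(4) by (simp add: sin_pi_quotient_def)
  have "eventually (\<lambda>y. ((h y - h k) / (y - k)) / ((sin (pi * y) - sin (pi * k)) / (y - k))
                        = sin_pi_quotient h y) (at k)"
    unfolding eventually_at
  proof (intro exI[of _ 1] conjI ballI impI allI)
    fix y assume y: "y \<noteq> k \<and> dist y k < 1"
    then have "sin (pi * y) \<noteq> 0"
      using sin_pi_zeros_eq[of y k] assms(4) by (auto simp: dist_norm)
    then show "((h y - h k) / (y - k)) / ((sin (pi * y) - sin (pi * k)) / (y - k)) = sin_pi_quotient h y"
      using y assms(4,5) by (simp add: sin_pi_quotient_def)
  qed simp
  then show ?thesis using Lim_transform_eventually[OF lim] by simp
qed

lemma sin_pi_quotient_holomorphic:
  fixes h :: "complex \<Rightarrow> complex"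
  assumes "open V" "h holomorphic_on V" "\<And>z::complex. z \<in> V \<Longrightarrow> sin (pi * z) = 0 \<Longrightarrow> h z = 0"
  shows "sin_pi_quotient h holomorphic_on V"
proof -
  have "sin_pi_quotient h field_differentiable (at z0)" if "z0 \<in> V" for z0
  proof -
    define S where "S = V \<inter> ball z0 (1/2)"
    define K where "K = {w \<in> S. sin (of_real pi * w) = 0}"
    have "open S" using assms(1) by (simp add: S_def open_Int)
    have sub: "K \<subseteq> {k}" if "k \<in> K" for k
    proof
      fix w assume w: "w \<in> K"
      have "norm (w - k) \<le> norm (w - z0) + norm (z0 - k)"
        by (rule norm_diff_triangle_ineq[of w z0 z0 k, simplified])
      also have "\<dots> < 1" using w that by (auto simp: K_def S_def dist_norm norm_minus_commute)
      finally show "w \<in> {k}" using sin_pi_zeros_eq[of w k] w that by (auto simp: K_def)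
    qed
    have "finite K"
    proof (cases "K = {}")
      case False
      then obtain k where "k \<in> K" by blast
      from sub[OF this] show ?thesis by (rule finite_subset) simp
    qed simp
    have "h holomorphic_on S - K" using assms(2) by (rule holomorphic_on_subset) (auto simp: S_def)
    then have "(\<lambda>z. h z / sin (of_real pi * z)) holomorphic_on (S - K)"
      by (intro holomorphic_intros) (auto simp: K_def)
    then have "sin_pi_quotient h holomorphic_on (S - K)"
      by (rule holomorphic_transform) (auto simp: sin_pi_quotient_def K_def)
    moreover have "(sin_pi_quotient h \<longlongrightarrow> sin_pi_quotient h k) (at k within S)" if "k \<in> K" for k
      using sin_pi_quotient_tendsto[OF assms(1,2), of k] that assms(3)
      by (auto simp: K_def S_def intro: tendsto_within_subset)
    ultimately have "sin_pi_quotient h holomorphic_on S"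
      by (intro no_isolated_singularity'[OF _ _ \<open>open S\<close> \<open>finite K\<close>])
    then show ?thesis
      using \<open>open S\<close> that by (auto simp: S_def intro: holomorphic_on_imp_differentiable_at)
  qed
  then show ?thesis by (simp add: holomorphic_on_def field_differentiable_at_within)
qed

section \<open>Real parts of complex powers\<close>

lemma Re_powr_of_real_eq:
  fixes w :: complex
  assumes "w \<noteq> 0"
  shows "Re (w powr of_real a) = norm w powr a * cos (a * Im (Ln w))"
proof -
  have "Re (w powr of_real a) = exp (a * ln (norm w)) * cos (a * Im (Ln w))"
    using assms by (simp add: powr_def Re_exp)
  moreover have "norm w powr a = exp (a * ln (norm w))"
    using assms by (simp add: powr_def mult.commute)
  ultimately show ?thesis by simp
qed

lemma Re_powr_of_real_le: "Re (w powr of_real a) \<le> norm w powr a" for w :: complex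
  by (cases "w = 0") (simp_all add: Re_powr_of_real_eq mult_left_le)

lemma Re_powr_of_real_ge:
  fixes w :: complex
  assumes "0 \<le> Re w" "0 < a" "a \<le> 1"
  shows "norm w powr a * cos (a * pi / 2) \<le> Re (w powr of_real a)"
proof (cases "w = 0")
  case False
  have "\<bar>a * Im (Ln w)\<bar> \<le> a * pi / 2"
    using Re_Ln_pos_le[OF False] assms by (simp add: abs_mult mult_left_mono)
  moreover have "a * pi / 2 \<le> pi" using assms by (simp add: mult_left_le_one_le)
  ultimately have "cos (a * pi / 2) \<le> cos (a * Im (Ln w))"
    using cos_monotone_0_pi_le[of "\<bar>a * Im (Ln w)\<bar>" "a * pi / 2"] by simp
  then show ?thesis using Re_powr_of_real_eq[OF False, of a] by (simp add: mult_left_mono)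
qed simp

lemma Re_powr_of_real_nonneg:
  fixes w :: complex
  assumes "0 \<le> Re w" "0 < a" "a \<le> 1"
  shows "0 \<le> Re (w powr of_real a)"
proof -
  have "0 \<le> cos (a * pi / 2)" using assms by (intro cos_ge_zero) (auto intro: order_trans[of _ 0])
  then show ?thesis using Re_powr_of_real_ge[OF assms] by (meson order_trans mult_nonneg_nonneg powr_ge_zero)
qed

lemma Re_powr_of_real_imaginary:
  fixes w :: complex
  assumes "Re w = 0"
  shows "Re (w powr of_real a) = norm w powr a * cos (a * pi / 2)"
proof (cases "w = 0")
  case False
  have "\<bar>Im (Ln w)\<bar> = pi / 2"
    using Re_Ln_pos_le[OF False] Re_Ln_pos_lt[OF False] assms by simp
  then have "Im (Ln w) = pi / 2 \<or> Im (Ln w) = - (pi / 2)" by linarith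
  then have "cos (a * Im (Ln w)) = cos (a * pi / 2)"
    by (metis cos_minus mult_minus_right times_divide_eq_right)
  then show ?thesis using Re_powr_of_real_eq[OF False, of a] by simp
qed simp

lemma powr_dominates:
  fixes C p q r :: real
  assumes "0 \<le> C" "0 < p" "p < q" "0 < r" "C powr (1 / (q - p)) \<le> r"
  shows "C * r powr p \<le> r powr q"
proof -
  have "C = (C powr (1 / (q - p))) powr (q - p)"
    using assms by (simp add: powr_powr)
  also have "\<dots> \<le> r powr (q - p)"
    using assms by (intro powr_mono2) auto
  finally have "C * r powr p \<le> r powr (q - p) * r powr p"
    by (simp add: mult_right_mono)
  also have "\<dots> = r powr q" using assms by (simp flip: powr_add)
  finally show ?thesis .
qed

lemma powr_minus_self_le_1:
  fixes y l :: real
  assumes "0 \<le> y" "0 < l" "l < 1"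
  shows "y powr l - y \<le> 1"
proof (cases "y \<le> 1")
  case True
  then have "y powr l \<le> 1 powr l" using assms by (intro powr_mono2) auto
  then show ?thesis using assms by simp
next
  case False
  then have "y powr l \<le> y powr 1" using assms by (intro powr_mono) auto
  then show ?thesis using False by simp
qed

lemma Re_powr_imaginary_axis_bound:
  fixes w :: complex
  assumes "Re w = 0" "0 < l" "l < 1" "0 \<le> \<delta>"
  shows "\<delta> / cos (l * pi / 2) * Re (w powr of_real l) - \<delta> * \<bar>Im w\<bar> \<le> \<delta>"
proof -
  have "0 < cos (l * pi / 2)" using assms by (intro cos_gt_zero_pi) (auto intro: less_trans[of _ 0])
  moreover have "norm w = \<bar>Im w\<bar>" using assms by (simp add: cmod_eq_Im)
  ultimately have "\<delta> / cos (l * pi / 2) * Re (w powr of_real l) = \<delta> * \<bar>Im w\<bar> powr l"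
    using Re_powr_of_real_imaginary[OF assms(1)] by simp
  moreover have "\<delta> * (\<bar>Im w\<bar> powr l - \<bar>Im w\<bar>) \<le> \<delta> * 1"
    using powr_minus_self_le_1[of "\<bar>Im w\<bar>" l] assms by (intro mult_left_mono) auto
  ultimately show ?thesis by (simp add: right_diff_distrib)
qed

lemma Re_powr_le_Re_powr_of_norm_ge:
  fixes w :: complex
  assumes "0 \<le> Re w" "0 < l" "l < m" "m < 1" "0 \<le> k" "0 < e" "0 < norm w"
    and "(k / (e * cos (m * pi / 2))) powr (1 / (m - l)) \<le> norm w"
  shows "k * Re (w powr of_real l) \<le> e * Re (w powr of_real m)"
proof -
  define \<kappa> where "\<kappa> = cos (m * pi / 2)"
  have "0 < \<kappa>" unfolding \<kappa>_def using assms by (intro cos_gt_zero_pi) (auto intro: less_trans[of _ 0])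
  have "k * Re (w powr of_real l) \<le> k * norm w powr l"
    using Re_powr_of_real_le assms(5) by (rule mult_left_mono)
  also have "\<dots> = e * \<kappa> * ((k / (e * \<kappa>)) * norm w powr l)"
    using \<open>0 < \<kappa>\<close> assms(6) by simp
  also have "\<dots> \<le> e * \<kappa> * norm w powr m"
    using assms \<open>0 < \<kappa>\<close> by (intro mult_left_mono powr_dominates) (auto simp: \<kappa>_def)
  also have "\<dots> \<le> e * Re (w powr of_real m)"
    using Re_powr_of_real_ge[of w m] assms by (simp add: \<kappa>_def mult.commute)
  finally show ?thesis .
qed

lemma Re_powr_le_linear:
  fixes w :: complex
  assumes "0 < l" "l < 1" "0 \<le> k" "0 < \<delta>" "0 < T"
    and "(2 * k / \<delta>) powr (1 / (1 - l)) \<le> T" "norm w \<le> 2 * T"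
  shows "k * Re (w powr of_real l) \<le> \<delta> * T"
proof -
  have "norm w powr l \<le> (2 * T) powr l" using assms by (intro powr_mono2) auto
  also have "\<dots> = 2 powr l * T powr l" using assms by (simp add: powr_mult)
  also have "\<dots> \<le> 2 * T powr l"
    using powr_mono[of l 1 2] assms by (simp add: mult_right_mono)
  finally have "k * Re (w powr of_real l) \<le> k * (2 * T powr l)"
    using Re_powr_of_real_le[of w l] assms(3) by (meson order_trans mult_left_mono)
  also have "\<dots> = \<delta> * ((2 * k / \<delta>) * T powr l)" using assms by simp
  also have "\<dots> \<le> \<delta> * T powr 1"
    using assms by (intro mult_left_mono powr_dominates) auto
  finally show ?thesis using assms by simp
qed

section \<open>Carlson's theorem\<close>

locale carlson =
  fixes h :: "complex \<Rightarrow> complex" and A c :: real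
  assumes holomorphic: "h holomorphic_on {z. 0 < Re z}"
    and growth: "\<And>z. 0 < Re z \<Longrightarrow> norm (h z) \<le> A * exp (c * norm z)"
    and type_nonneg: "0 \<le> c"
    and type_less_pi: "c < pi"
    and zero_at_nat: "\<And>n::nat. 0 < n \<Longrightarrow> h (of_nat n) = 0"
begin

lemma growth_const_nonneg: "0 \<le> A"
proof -
  have "0 \<le> norm (h 1)" by simp
  also have "\<dots> \<le> A * exp (c * norm (1::complex))" by (rule growth) simp
  finally show ?thesis by (simp add: zero_le_mult_iff)
qed

lemma zero_at_integer:
  fixes z :: complex
  assumes "0 < Re z" "sin (pi * z) = 0"
  shows "h z = 0"
proof -
  obtain m :: int where m: "z = of_int m" using assms(2) sin_pi_eq_0_iff by blast
  with assms(1) have "0 < m" by simp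
  with m have "z = of_nat (nat m)" by simp
  with \<open>0 < m\<close> zero_at_nat[of "nat m"] show ?thesis by simp
qed

lemma quotient_holomorphic: "sin_pi_quotient h holomorphic_on {z. 0 < Re z}"
  by (rule sin_pi_quotient_holomorphic[OF open_halfspace_Re_gt holomorphic])
    (auto intro: zero_at_integer)

lemma norm_quotient_le:
  fixes z :: complex
  assumes "0 < Re z" "1 \<le> \<bar>Im z\<bar> \<or> (\<exists>n::nat. Re z = n + 1/2)"
  shows "norm (sin_pi_quotient h z) \<le> 4 * A * exp (c * Re z - (pi - c) * \<bar>Im z\<bar>)"
proof -
  from assms(2) have sin_ge: "exp (pi * \<bar>Im z\<bar>) / 4 \<le> norm (sin (pi * z))"
  proof
    assume "\<exists>n::nat. Re z = n + 1/2"
    then obtain n :: nat where "Re z = n + 1/2" by blast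
    from norm_sin_pi_ge_half_integer[OF this] show ?thesis
      using exp_gt_zero[of "pi * \<bar>Im z\<bar>"] by linarith
  qed (rule norm_sin_pi_ge_of_abs_Im_ge_1)
  then have "sin (pi * z) \<noteq> 0"
    by (metis exp_gt_zero divide_pos_pos norm_zero not_less zero_less_numeral)
  then have "norm (sin_pi_quotient h z) = norm (h z) / norm (sin (pi * z))"
    by (simp add: sin_pi_quotient_def norm_divide)
  also have "\<dots> \<le> A * exp (c * norm z) / (exp (pi * \<bar>Im z\<bar>) / 4)"
    using growth[OF assms(1)] sin_ge growth_const_nonneg by (intro frac_le) auto
  also have "\<dots> = 4 * A * exp (c * norm z - pi * \<bar>Im z\<bar>)"
    by (simp add: exp_diff)
  also have "\<dots> \<le> 4 * A * exp (c * Re z - (pi - c) * \<bar>Im z\<bar>)"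
  proof -
    have "c * norm z \<le> c * (Re z + \<bar>Im z\<bar>)"
      using cmod_le[of z] assms(1) type_nonneg by (simp add: mult_left_mono)
    then show ?thesis using growth_const_nonneg by (intro mult_left_mono) (simp_all add: algebra_simps)
  qed
  finally show ?thesis .
qed

text \<open>The auxiliary function of the Phragmen-Lindelof argument, with \<open>w = z - 1/2\<close>:
  \<open>exp (-c z)\<close> cancels the growth of the quotient in \<open>Re z\<close>; for \<open>k = (\<pi> - c) / cos (l \<pi> / 2)\<close>,
  \<open>exp (k w\<^sup>l)\<close> is exactly compensated on the line \<open>Re z = 1/2\<close> by the decay
  \<open>exp (-(\<pi> - c) |Im z|)\<close> of the quotient; \<open>exp (-e w\<^sup>m)\<close> with \<open>l < m < 1\<close> damps it on the
  far vertical side of the rectangle.\<close>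
definition weighted_quotient :: "real \<Rightarrow> real \<Rightarrow> real \<Rightarrow> real \<Rightarrow> complex \<Rightarrow> complex" where
  "weighted_quotient k l e m z =
     sin_pi_quotient h z *
     exp (- of_real c * z + of_real k * (z - 1/2) powr of_real l - of_real e * (z - 1/2) powr of_real m)"

lemma norm_weighted_quotient_le:
  fixes z :: complex
  assumes "0 < Re z" "1 \<le> \<bar>Im z\<bar> \<or> (\<exists>n::nat. Re z = n + 1/2)"
    and "k * Re ((z - 1/2) powr l) - e * Re ((z - 1/2) powr m) - (pi - c) * \<bar>Im z\<bar> \<le> pi - c"
  shows "norm (weighted_quotient k l e m z) \<le> 4 * A * exp (pi - c)"
proof -
  define E where "E = k * Re ((z - 1/2) powr l) - e * Re ((z - 1/2) powr m)"
  have "norm (weighted_quotient k l e m z) = norm (sin_pi_quotient h z) * exp (- c * Re z + E)"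
    by (simp add: weighted_quotient_def E_def norm_mult norm_exp_eq_Re)
  also have "\<dots> \<le> 4 * A * exp (c * Re z - (pi - c) * \<bar>Im z\<bar>) * exp (- c * Re z + E)"
    using norm_quotient_le[OF assms(1,2)] by (rule mult_right_mono) simp
  also have "\<dots> = 4 * A * exp (E - (pi - c) * \<bar>Im z\<bar>)"
    by (simp add: mult.assoc flip: exp_add)
  also have "\<dots> \<le> 4 * A * exp (pi - c)"
    using assms(3) growth_const_nonneg by (intro mult_left_mono) (simp_all add: E_def)
  finally show ?thesis .
qed

lemma weighted_quotient_holomorphic:
  "weighted_quotient k l e m holomorphic_on {z. 1/2 < Re z}"
proof -
  have "sin_pi_quotient h holomorphic_on {z. 1/2 < Re z}"
    by (rule holomorphic_on_subset[OF quotient_holomorphic]) auto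
  then show ?thesis unfolding weighted_quotient_def
    by (intro holomorphic_intros) (auto simp: complex_nonpos_Reals_iff)
qed

lemma weighted_quotient_continuous:
  assumes "0 < l" "0 < m"
  shows "continuous_on {z. 1/2 \<le> Re z} (weighted_quotient k l e m)"
proof -
  have "continuous_on {z. 1/2 \<le> Re z} (sin_pi_quotient h)"
    by (rule holomorphic_on_imp_continuous_on, rule holomorphic_on_subset[OF quotient_holomorphic]) auto
  moreover have "continuous_on {z. 1/2 \<le> Re z} (\<lambda>z. (z - 1/2) powr of_real a)" if "0 < a" for a
    by (rule continuous_on_powr_complex) (auto intro!: continuous_intros simp: that)
  ultimately show ?thesis unfolding weighted_quotient_def using assms
    by (intro continuous_intros) auto
qed

lemma norm_weighted_quotient_le_on_frontier:
  fixes N :: nat and T :: real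
  assumes "0 < l" "l < m" "m < 1" "0 < e" "k = (pi - c) / cos (l * pi / 2)"
    and "(k / (e * cos (m * pi / 2))) powr (1 / (m - l)) \<le> N" "1 \<le> N"
    and "(2 * k / (pi - c)) powr (1 / (1 - l)) \<le> T" "N \<le> T"
    and "z \<in> frontier (cbox (Complex (1/2) (-T)) (Complex (N + 1/2) T))"
  shows "norm (weighted_quotient k l e m z) \<le> 4 * A * exp (pi - c)"
proof -
  define \<delta> where "\<delta> = pi - c"
  define w where "w = z - 1/2"
  have "0 < \<delta>" using type_less_pi by (simp add: \<delta>_def)
  moreover have "0 < cos (l * pi / 2)"
    using assms by (intro cos_gt_zero_pi) (auto intro: less_trans[of _ 0])
  ultimately have "0 < k" by (simp add: assms(5) \<delta>_def)
  have z: "1/2 \<le> Re z" "Re z \<le> N + 1/2" "\<bar>Im z\<bar> \<le> T"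
    and side: "Re z = 1/2 \<or> Re z = N + 1/2 \<or> \<bar>Im z\<bar> = T"
    using assms(10) by (auto simp: frontier_cbox in_cbox_complex_iff in_box_complex_iff)
  have "0 \<le> Re w" using z by (simp add: w_def)
  then have "0 \<le> e * Re (w powr m)"
    using Re_powr_of_real_nonneg[of w m] assms by simp
  from side have "(1 \<le> \<bar>Im z\<bar> \<or> (\<exists>n::nat. Re z = n + 1/2)) \<and>
    k * Re (w powr l) - e * Re (w powr m) - \<delta> * \<bar>Im z\<bar> \<le> \<delta>"
  proof (elim disjE)
    assume "Re z = 1/2"
    then have "Re w = 0" by (simp add: w_def)
    from Re_powr_imaginary_axis_bound[OF this, of l \<delta>] show ?thesis
      using assms \<open>0 < \<delta>\<close> \<open>0 \<le> e * Re (w powr m)\<close> \<open>Re z = 1/2\<close>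
      by (auto simp: \<delta>_def w_def intro: exI[of _ 0])
  next
    assume "Re z = N + 1/2"
    then have "N \<le> norm w" using complex_Re_le_cmod[of w] by (simp add: w_def)
    then have "k * Re (w powr l) \<le> e * Re (w powr m)"
      using assms \<open>0 < k\<close> \<open>0 \<le> Re w\<close> by (intro Re_powr_le_Re_powr_of_norm_ge) auto
    moreover have "0 \<le> \<delta> * \<bar>Im z\<bar>" using \<open>0 < \<delta>\<close> by simp
    ultimately have "k * Re (w powr l) - e * Re (w powr m) - \<delta> * \<bar>Im z\<bar> \<le> \<delta>"
      using \<open>0 < \<delta>\<close> by linarith
    then show ?thesis using \<open>Re z = N + 1/2\<close> by blast
  next
    assume "\<bar>Im z\<bar> = T"
    have "Re w \<le> N" "Im w = Im z" using z by (simp_all add: w_def)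
    then have "norm w \<le> 2 * T"
      using cmod_le[of w] z \<open>0 \<le> Re w\<close> assms(9) by simp
    then have "k * Re (w powr l) \<le> \<delta> * T"
      using assms \<open>0 < k\<close> \<open>0 < \<delta>\<close> by (intro Re_powr_le_linear) (auto simp: \<delta>_def)
    moreover have "1 \<le> T" using assms(7,9) by simp
    ultimately show ?thesis using \<open>\<bar>Im z\<bar> = T\<close> \<open>0 < \<delta>\<close> \<open>0 \<le> e * Re (w powr m)\<close> by auto
  qed
  with z show ?thesis
    unfolding \<delta>_def w_def by (intro norm_weighted_quotient_le) auto
qed

lemma norm_weighted_quotient_bound:
  fixes z0 :: complex
  assumes "0 < l" "l < m" "m < 1" "0 < e" "1/2 < Re z0"
  shows "norm (weighted_quotient ((pi - c) / cos (l * pi / 2)) l e m z0) \<le> 4 * A * exp (pi - c)"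
proof -
  define k where "k = (pi - c) / cos (l * pi / 2)"
  obtain N :: nat
    where N: "max (max ((k / (e * cos (m * pi / 2))) powr (1 / (m - l))) 1) (Re z0) < N"
    using reals_Archimedean2 by blast
  define T where "T = max (max (real N) ((2 * k / (pi - c)) powr (1 / (1 - l)))) (\<bar>Im z0\<bar> + 1)"
  define S where "S = cbox (Complex (1/2) (-T)) (Complex (N + 1/2) T)"
  have "norm (weighted_quotient k l e m z0) \<le> 4 * A * exp (pi - c)"
  proof (rule maximum_modulus_frontier[where f = "weighted_quotient k l e m" and S = S])
    show "weighted_quotient k l e m holomorphic_on interior S"
      by (rule holomorphic_on_subset[OF weighted_quotient_holomorphic])
        (auto simp: S_def in_box_complex_iff)
    show "continuous_on (closure S) (weighted_quotient k l e m)"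
      using assms by (intro continuous_on_subset[OF weighted_quotient_continuous])
        (auto simp: S_def in_cbox_complex_iff)
    show "norm (weighted_quotient k l e m z) \<le> 4 * A * exp (pi - c)" if "z \<in> frontier S" for z
      by (rule norm_weighted_quotient_le_on_frontier[OF assms(1-4) k_def _ _ _ _ that[unfolded S_def]])
        (use N in \<open>auto simp: T_def\<close>)
    show "z0 \<in> S" using assms N by (auto simp: S_def in_cbox_complex_iff T_def)
  qed (simp add: S_def)
  then show ?thesis by (simp add: k_def)
qed

lemma quotient_real_axis_bound:
  assumes "3/2 \<le> x" "0 < l" "l < 1"
  shows "norm (sin_pi_quotient h (of_real x)) * exp (- c * x) *
    exp ((pi - c) / cos (l * pi / 2) * (x - 1/2) powr l) \<le> 4 * A * exp (pi - c)"
    (is "?a * exp (?k * ?w0 powr l) \<le> ?M")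
proof (rule tendsto_le[OF trivial_limit_at_right_real _ tendsto_const])
  define m where "m = (1 + l) / 2"
  have "(of_real x - 1/2) powr of_real p = (of_real (?w0 powr p) :: complex)" for p
    using assms powr_of_real[of ?w0 p] by simp
  then have "norm (weighted_quotient ?k l e m (of_real x)) = ?a * exp (?k * ?w0 powr l - e * ?w0 powr m)"
    for e by (simp add: weighted_quotient_def norm_mult norm_exp_eq_Re mult.assoc flip: exp_add)
  then have damped: "?a * exp (?k * ?w0 powr l - e * ?w0 powr m) \<le> ?M" if "0 < e" for e
    using norm_weighted_quotient_bound[of l m e "of_real x"] assms that by (simp add: m_def)
  show "\<forall>\<^sub>F e in at_right 0. ?a * exp (?k * ?w0 powr l) \<le> ?M * exp (e * ?w0 powr m)"
  proof (rule eventually_mono[OF eventually_at_right_less])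
    fix e :: real assume "0 < e"
    from damped[OF this] show "?a * exp (?k * ?w0 powr l) \<le> ?M * exp (e * ?w0 powr m)"
      by (simp add: exp_diff field_simps)
  qed
  show "((\<lambda>e. ?M * exp (e * ?w0 powr m)) \<longlongrightarrow> ?M) (at_right 0)"
    by (auto intro!: tendsto_eq_intros)
qed

lemma quotient_vanishes_on_real_axis:
  assumes "3/2 \<le> x"
  shows "sin_pi_quotient h (of_real x) = 0"
proof -
  define a where "a = norm (sin_pi_quotient h (of_real x)) * exp (- c * x)"
  define M where "M = 4 * A * exp (pi - c)"
  have "0 < pi - c" using type_less_pi by simp
  have "0 \<le> a" by (simp add: a_def)
  have cos_bound: "a * (pi - c) \<le> M * cos (l * pi / 2)" if "0 < l" "l < 1" for l
  proof -
    define k where "k = (pi - c) / cos (l * pi / 2)"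
    have "0 < cos (l * pi / 2)"
      using that by (intro cos_gt_zero_pi) (auto intro: less_trans[of _ 0])
    have "1 \<le> (x - 1/2) powr l" using assms that by (intro ge_one_powr_ge_zero) simp_all
    then have "k \<le> k * (x - 1/2) powr l"
      using mult_left_mono[of 1 "(x - 1/2) powr l" k] \<open>0 < pi - c\<close> \<open>0 < cos (l * pi / 2)\<close>
      by (simp add: k_def)
    also have "\<dots> \<le> exp (k * (x - 1/2) powr l)"
      using exp_ge_add_one_self by (rule order_trans[rotated]) simp
    finally have "a * k \<le> a * exp (k * (x - 1/2) powr l)"
      using \<open>0 \<le> a\<close> by (rule mult_left_mono)
    also have "\<dots> \<le> M"
      using quotient_real_axis_bound[OF assms that] by (simp add: a_def M_def k_def)
    finally have "a * k \<le> M" .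
    then show ?thesis using \<open>0 < cos (l * pi / 2)\<close> by (simp add: k_def field_simps)
  qed
  have "a * (pi - c) \<le> 0"
  proof (intro tendsto_le[OF trivial_limit_at_left_real _ tendsto_const])
    show "((\<lambda>l. M * cos (l * pi / 2)) \<longlongrightarrow> 0) (at_left 1)"
      by (auto intro!: tendsto_eq_intros)
    show "\<forall>\<^sub>F l in at_left 1. a * (pi - c) \<le> M * cos (l * pi / 2)"
      using eventually_at_left_real[of 0 1] by (rule eventually_mono) (use cos_bound in auto)
  qed
  then have "a = 0" using \<open>0 \<le> a\<close> \<open>0 < pi - c\<close> by (simp add: mult_le_0_iff)
  then show ?thesis by (simp add: a_def)
qed

lemma vanishes_on_real_axis:
  assumes "3/2 \<le> x"
  shows "h (of_real x) = 0"
proof (cases "sin (of_real pi * complex_of_real x) = 0")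
  case True
  then show ?thesis using assms by (intro zero_at_integer) auto
next
  case False
  then have "h (of_real x) = sin_pi_quotient h (of_real x) * sin (of_real pi * of_real x)"
    by (simp add: sin_pi_quotient_def)
  with quotient_vanishes_on_real_axis[OF assms] show ?thesis by simp
qed

end

lemma holomorphic_vanishes_on_halfplane_of_ray:
  fixes g :: "complex \<Rightarrow> complex"
  assumes "open S" "{t. 0 \<le> Re t} \<subseteq> S" "g holomorphic_on S"
    and "0 \<le> a" "\<And>y. a \<le> y \<Longrightarrow> g (of_real y) = 0"
    and "0 \<le> Re t"
  shows "g t = 0"
proof -
  define W where "W = connected_component_set S 0"
  have "open W" "connected W" using assms(1) by (simp_all add: W_def open_connected_component)
  have halfplane: "{t. 0 \<le> Re t} \<subseteq> W" unfolding W_def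
    using assms(2) by (intro connected_component_maximal convex_connected convex_halfspace_Re_ge) auto
  have hol: "g holomorphic_on W"
    using assms(3) by (rule holomorphic_on_subset) (simp add: W_def connected_component_subset)
  have limpt: "complex_of_real (a + 1) islimpt of_real ` {a..}"
    unfolding islimpt_approachable
  proof (intro allI impI)
    fix e :: real assume "0 < e"
    have "of_real (a + 1 + min 1 e / 2) \<in> of_real ` {a..}" using \<open>0 < e\<close> by (intro imageI) simp
    then show "\<exists>x'\<in>of_real ` {a..}. x' \<noteq> complex_of_real (a + 1) \<and> dist x' (complex_of_real (a + 1)) < e"
      by (rule bexI[rotated]) (use \<open>0 < e\<close> in \<open>auto simp: dist_norm\<close>)
  qed
  show ?thesis
    by (rule analytic_continuation[OF hol \<open>open W\<close> \<open>connected W\<close> _ _ limpt])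
      (use halfplane assms(4-6) in auto)
qed

lemma exp_type_bound_on_closed_halfplane:
  fixes g :: "complex \<Rightarrow> complex"
  assumes "continuous_on {t. 0 \<le> Re t} g" "0 \<le> c"
    and "\<And>t. 0 \<le> Re t \<Longrightarrow> R \<le> norm t \<Longrightarrow> norm (g t) \<le> C * exp (c * norm t)"
  obtains A where "\<And>t. 0 \<le> Re t \<Longrightarrow> norm (g t) \<le> A * exp (c * norm t)"
proof -
  define K where "K = {t. 0 \<le> Re t} \<inter> cball 0 R"
  have "compact K" unfolding K_def
    by (intro closed_Int_compact closed_halfspace_Re_ge compact_cball)
  moreover have "continuous_on K g"
    using assms(1) by (rule continuous_on_subset) (auto simp: K_def)
  ultimately have "bounded (g ` K)" by (intro compact_imp_bounded compact_continuous_image)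
  then obtain B where B: "\<And>t. t \<in> K \<Longrightarrow> norm (g t) \<le> B" by (auto simp: bounded_iff)
  define A where "A = max B 0 + max C 0"
  have "B \<le> A" "C \<le> A" "0 \<le> A" by (auto simp: A_def)
  have "norm (g t) \<le> A * exp (c * norm t)" if "0 \<le> Re t" for t
  proof (cases "R \<le> norm t")
    case True
    then have "norm (g t) \<le> C * exp (c * norm t)" using assms(3) that by simp
    also have "\<dots> \<le> A * exp (c * norm t)" using \<open>C \<le> A\<close> by (rule mult_right_mono) simp
    finally show ?thesis .
  next
    case False
    then have "norm (g t) \<le> B" using that by (intro B) (simp add: K_def)
    also have "\<dots> \<le> A * 1" using \<open>B \<le> A\<close> by simp
    also have "\<dots> \<le> A * exp (c * norm t)" using \<open>0 \<le> A\<close> assms(2) by (intro mult_left_mono) simp_all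
    finally show ?thesis .
  qed
  then show ?thesis by (rule that)
qed

theorem carlson_closed_halfplane:
  fixes g :: "complex \<Rightarrow> complex"
  assumes "open S" "{t. 0 \<le> Re t} \<subseteq> S" "g holomorphic_on S" "0 \<le> c" "c < pi"
    and "\<And>t. 0 \<le> Re t \<Longrightarrow> R \<le> norm t \<Longrightarrow> norm (g t) \<le> C * exp (c * norm t)"
    and "\<And>n. g (of_nat (m0 + n)) = 0"
    and "0 \<le> Re t"
  shows "g t = 0"
proof -
  have "continuous_on {t. 0 \<le> Re t} g"
    using assms(2,3) holomorphic_on_imp_continuous_on holomorphic_on_subset by blast
  then obtain A where A: "\<And>t. 0 \<le> Re t \<Longrightarrow> norm (g t) \<le> A * exp (c * norm t)"
    using exp_type_bound_on_closed_halfplane assms(4,6) by blast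
  have "norm (g 0) \<le> A" using A[of 0] by simp
  then have "0 \<le> A" by (meson norm_ge_zero order_trans)
  interpret shifted: carlson "\<lambda>w. g (w + of_nat m0)" "A * exp (c * m0)" c
  proof
    have "(g \<circ> (\<lambda>w. w + of_nat m0)) holomorphic_on {z. 0 < Re z}"
      using assms(2) by (intro holomorphic_on_compose_gen[OF _ assms(3)]) (auto intro!: holomorphic_intros)
    then show "(\<lambda>w. g (w + of_nat m0)) holomorphic_on {z. 0 < Re z}" by (simp add: o_def)
    fix w :: complex assume "0 < Re w"
    then have "norm (g (w + of_nat m0)) \<le> A * exp (c * norm (w + of_nat m0))" by (intro A) simp
    also have "\<dots> \<le> A * exp (c * (norm w + m0))"
      using \<open>0 \<le> A\<close> assms(4) norm_triangle_ineq[of w "of_nat m0"]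
      by (intro mult_left_mono) (auto intro!: mult_left_mono simp: zero_le_mult_iff)
    also have "\<dots> = A * exp (c * m0) * exp (c * norm w)" by (simp add: distrib_left exp_add)
    finally show "norm (g (w + of_nat m0)) \<le> A * exp (c * m0) * exp (c * norm w)" .
  next
    fix n :: nat
    show "g (of_nat n + of_nat m0) = 0" if "0 < n" using assms(7)[of n] by (simp add: add.commute)
  qed (use assms(4,5) in auto)
  have ray: "g (of_real y) = 0" if "3/2 + m0 \<le> y" for y
    using shifted.vanishes_on_real_axis[of "y - m0"] that by simp
  show ?thesis
    by (rule holomorphic_vanishes_on_halfplane_of_ray[OF assms(1-3), of "3/2 + m0"])
      (use ray assms(8) in auto)
qed

section \<open>Holomorphic functions of several variables\<close>

lemma bounded_linear_vector_smult_left: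
  fixes d :: "complex ^ 'n"
  shows "bounded_linear (\<lambda>t::complex. t *s d)"
proof (rule bounded_linear_intro[where K = "\<Sum>i\<in>UNIV. norm (d $ i)"])
  show "(x + y) *s d = x *s d + y *s d" for x y :: complex
    by (simp add: vec_eq_iff distrib_right)
  show "(r *\<^sub>R x) *s d = r *\<^sub>R (x *s d)" for r :: real and x :: complex
    by (simp add: vec_eq_iff)
  show "norm (x *s d) \<le> norm x * (\<Sum>i\<in>UNIV. norm (d $ i))" for x :: complex
  proof -
    have "norm (x *s d) \<le> (\<Sum>i\<in>UNIV. norm ((x *s d) $ i))"
      unfolding norm_vec_def by (rule L2_set_le_sum) simp
    also have "\<dots> = norm x * (\<Sum>i\<in>UNIV. norm (d $ i))" by (simp add: norm_mult sum_distrib_left)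
    finally show ?thesis .
  qed
qed

lemma open_line_preimage:
  fixes q d :: "complex ^ 'n"
  assumes "open V"
  shows "open {t::complex. q + t *s d \<in> V}"
proof -
  have "isCont (\<lambda>t. q + t *s d) t" for t
    using linear_continuous_at[OF bounded_linear_vector_smult_left[of d]]
    by (intro continuous_add continuous_const)
  then have "open ((\<lambda>t. q + t *s d) -` V)" by (rule continuous_open_vimage[OF assms])
  then show ?thesis by (simp add: vimage_def)
qed

lemma convex_line_preimage:
  fixes q d :: "complex ^ 'n"
  assumes "convex V"
  shows "convex {t::complex. q + t *s d \<in> V}"
  unfolding convex_def
proof (intro ballI allI impI)
  fix s t :: complex and u v :: real
  assume "s \<in> {t. q + t *s d \<in> V}" "t \<in> {t. q + t *s d \<in> V}"
    and "0 \<le> u" "0 \<le> v" "u + v = 1"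
  then have "u *\<^sub>R (q + s *s d) + v *\<^sub>R (q + t *s d) \<in> V"
    using assms by (simp add: convex_def)
  moreover have "q + (u *\<^sub>R s + v *\<^sub>R t) *s d = u *\<^sub>R (q + s *s d) + v *\<^sub>R (q + t *s d)"
  proof -
    have "v = 1 - u" using \<open>u + v = 1\<close> by simp
    then show ?thesis by (simp add: vec_eq_iff) (simp add: scaleR_conv_of_real algebra_simps)
  qed
  ultimately show "u *\<^sub>R s + v *\<^sub>R t \<in> {t. q + t *s d \<in> V}" by simp
qed

lemma holomorphic_n_on_line:
  fixes f :: "complex ^ 'n \<Rightarrow> complex"
  assumes "holomorphic_n f U"
  shows "(\<lambda>t. f (q + t *s d)) holomorphic_on {t. q + t *s d \<in> U}"
  unfolding holomorphic_on_def field_differentiable_def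
proof
  fix t assume "t \<in> {t. q + t *s d \<in> U}"
  then obtain L where L: "(f has_derivative L) (at (q + t *s d))" "\<forall>(c::complex) v. L (c *s v) = c * L v"
    using assms unfolding holomorphic_n_def by blast
  have "((\<lambda>t. q + t *s d) has_derivative (\<lambda>s. s *s d)) (at t)"
    using bounded_linear_vector_smult_left[of d]
    by (intro derivative_eq_intros) (auto simp: bounded_linear_imp_has_derivative)
  from has_derivative_compose[OF this L(1)]
  have "((\<lambda>t. f (q + t *s d)) has_derivative (\<lambda>s. L (s *s d))) (at t)" by (simp add: o_def)
  moreover have "(\<lambda>s. L (s *s d)) = (*) (L d)" using L(2) by (auto simp: mult.commute)
  ultimately have "((\<lambda>t. f (q + t *s d)) has_field_derivative L d) (at t)"
    by (simp add: has_field_derivative_def)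
  then show "\<exists>f'. ((\<lambda>t. f (q + t *s d)) has_field_derivative f') (at t within {t. q + t *s d \<in> U})"
    by (blast intro: has_field_derivative_at_within)
qed

text \<open>Restricted to the complex line through \<open>q\<close> and \<open>w\<close>, this is the one-variable identity
  theorem on the convex preimage of the ball.\<close>
lemma holomorphic_n_vanishing_spreads_in_ball:
  fixes f :: "complex ^ 'n \<Rightarrow> complex"
  assumes "holomorphic_n f U" "ball z e \<subseteq> U" "q \<in> ball z e"
    and "0 < r" "\<And>w. w \<in> ball q r \<Longrightarrow> f w = 0"
    and "w \<in> ball z e"
  shows "f w = 0"
proof -
  define d where "d = w - q"
  define P where "P = {t::complex. q + t *s d \<in> ball z e}"
  define Z where "Z = {t::complex. q + t *s d \<in> ball q r}"
  have "open P" "open Z" unfolding P_def Z_def by (intro open_line_preimage open_ball)+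
  have "connected P" unfolding P_def by (intro convex_connected convex_line_preimage convex_ball)
  have "0 \<in> P" "1 \<in> P" "0 \<in> Z" using assms(3,4,6) by (simp_all add: P_def Z_def d_def)
  have hol: "(\<lambda>t. f (q + t *s d)) holomorphic_on P"
    using holomorphic_n_on_line[OF assms(1), of q d] by (rule holomorphic_on_subset) (use assms(2) in \<open>auto simp: P_def\<close>)
  have limpt: "0 islimpt Z \<inter> P"
    using \<open>open P\<close> \<open>open Z\<close> \<open>0 \<in> P\<close> \<open>0 \<in> Z\<close> by (intro interior_limit_point) (simp add: interior_open)
  have "f (q + 1 *s d) = 0"
    by (rule analytic_continuation[OF hol \<open>open P\<close> \<open>connected P\<close> _ \<open>0 \<in> P\<close> limpt])
      (use assms(5) \<open>1 \<in> P\<close> in \<open>auto simp: Z_def\<close>)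
  then show ?thesis by (simp add: d_def)
qed

lemma holomorphic_n_identity:
  fixes f :: "complex ^ 'n \<Rightarrow> complex"
  assumes "holomorphic_n f U" "open W" "connected W" "W \<subseteq> U"
    and "0 < r" "ball p r \<subseteq> W" "\<And>w. w \<in> ball p r \<Longrightarrow> f w = 0"
    and "z \<in> W"
  shows "f z = 0"
proof -
  define Z where "Z = W \<inter> interior {w. f w = 0}"
  have "open Z" using assms(2) by (simp add: Z_def open_Int)
  have "open (W - Z)"
    unfolding open_contains_ball
  proof
    fix x assume x: "x \<in> W - Z"
    obtain e where "0 < e" "ball x e \<subseteq> W" using assms(2) x open_contains_ball by blast
    have "ball x e \<inter> Z = {}"
    proof (rule ccontr)
      assume "ball x e \<inter> Z \<noteq> {}"
      then obtain q s where "q \<in> ball x e" "0 < s" "ball q s \<subseteq> {w. f w = 0}"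
        by (auto simp: Z_def mem_interior)
      have "f w = 0" if "w \<in> ball x e" for w
        by (rule holomorphic_n_vanishing_spreads_in_ball[OF assms(1) _ \<open>q \<in> ball x e\<close> \<open>0 < s\<close> _ that])
          (use \<open>ball x e \<subseteq> W\<close> assms(4) \<open>ball q s \<subseteq> {w. f w = 0}\<close> in auto)
      then have "x \<in> interior {w. f w = 0}"
        using \<open>0 < e\<close> mem_interior by blast
      with x show False by (simp add: Z_def)
    qed
    then show "\<exists>e>0. ball x e \<subseteq> W - Z" using \<open>0 < e\<close> \<open>ball x e \<subseteq> W\<close> by blast
  qed
  have "p \<in> interior {w. f w = 0}" using assms(5,7) mem_interior by blast
  moreover have "p \<in> W" using assms(5,6) by auto
  ultimately have "Z \<inter> W \<noteq> {}" by (auto simp: Z_def)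
  moreover have "Z \<inter> W = {} \<or> (W - Z) \<inter> W = {}"
    by (rule connectedD[OF assms(3) \<open>open Z\<close> \<open>open (W - Z)\<close>]) auto
  ultimately have "z \<in> interior {w. f w = 0}" using assms(8) by (auto simp: Z_def)
  then show ?thesis using interior_subset by blast
qed

section \<open>Vanishing on the closed orthant\<close>

lemma convex_closed_orthant: "convex closed_orthant"
  unfolding convex_def closed_orthant_def by (auto intro!: add_nonneg_nonneg mult_nonneg_nonneg)

lemma closed_orthant_subset_connected_component:
  assumes "closed_orthant \<subseteq> U"
  shows "closed_orthant \<subseteq> connected_component_set U 0"
  using assms convex_connected[OF convex_closed_orthant]
  by (intro connected_component_maximal) (auto simp: closed_orthant_def)

lemma ball_subset_closed_orthant: "ball (\<chi> i. 1) 1 \<subseteq> closed_orthant"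
proof
  fix w :: "complex ^ 'n" assume "w \<in> ball (\<chi> i. 1) 1"
  then have "norm ((w - (\<chi> i. 1)) $ i) < 1" for i
    using Finite_Cartesian_Product.norm_nth_le[of "w - (\<chi> i. 1)" i]
    by (simp add: dist_norm norm_minus_commute)
  then have near_1: "norm (w $ i - 1) < 1" for i by simp
  have "\<bar>Re (w $ i - 1)\<bar> < 1" for i
    using abs_Re_le_cmod[of "w $ i - 1"] near_1[of i] by linarith
  then show "w \<in> closed_orthant" by (auto simp: closed_orthant_def abs_less_iff less_imp_le)
qed

text \<open>Interpolates between no condition (\<open>A = {}\<close>) and membership in \<open>dominant_weights\<close>
  (\<open>A = UNIV\<close>).\<close>
definition dominant_on :: "'n::{finite,linorder} set \<Rightarrow> (complex, 'n) vec \<Rightarrow> bool" where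
  "dominant_on A z \<longleftrightarrow>
     (\<exists>k::'n \<Rightarrow> nat. (\<forall>i\<in>A. z $ i = of_nat (k i)) \<and> (\<forall>i\<in>A. \<forall>j\<in>A. i \<le> j \<longrightarrow> k j \<le> k i))"

lemma dominant_on_UNIV_imp_dominant_weight:
  assumes "dominant_on UNIV z"
  shows "z \<in> dominant_weights"
proof -
  obtain k where "\<And>i. z $ i = of_nat (k i)" "\<And>i j. i \<le> j \<Longrightarrow> k j \<le> k i"
    using assms by (auto simp: dominant_on_def)
  then have "z = (\<chi> i. of_nat ((\<chi> i. k i) $ i))" "\<forall>i j. i \<le> j \<longrightarrow> (\<chi> i. k i) $ j \<le> (\<chi> i. k i) $ i"
    by (simp_all add: vec_eq_iff)
  then show ?thesis unfolding dominant_weights_def by blast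
qed

lemma dominant_on_insert_large:
  fixes z :: "(complex, 'n::{finite,linorder}) vec"
  assumes "dominant_on A z" "\<forall>i\<in>A. j < i"
  obtains m0 where "\<And>n. dominant_on (insert j A) (\<chi> i. if i = j then of_nat (m0 + n) else z $ i)"
proof -
  obtain k where k: "\<forall>i\<in>A. z $ i = of_nat (k i)" "\<forall>i\<in>A. \<forall>i'\<in>A. i \<le> i' \<longrightarrow> k i' \<le> k i"
    using assms(1) by (auto simp: dominant_on_def)
  define m0 where "m0 = Max (insert 0 (k ` A))"
  have "k i \<le> m0 + n" if "i \<in> A" for i n
    using that by (simp add: m0_def trans_le_add1)
  then have "dominant_on (insert j A) (\<chi> i. if i = j then of_nat (m0 + n) else z $ i)" for n
    unfolding dominant_on_def using k assms(2)
    by (intro exI[of _ "k(j := m0 + n)"]) (auto simp: not_le[symmetric])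
  then show ?thesis by (rule that)
qed

lemma vanishes_on_dominant_on_of_insert:
  fixes f :: "(complex, 'n::{finite,linorder}) vec \<Rightarrow> complex"
  assumes "open U" "closed_orthant \<subseteq> U" "holomorphic_n f U" "0 \<le> c" "c < pi"
    and growth: "\<And>z. z \<in> closed_orthant \<Longrightarrow> R \<le> norm z \<Longrightarrow> norm (f z) \<le> C * exp (c * norm1 z)"
    and "\<forall>i\<in>A. j < i"
    and vanish: "\<And>z. z \<in> closed_orthant \<Longrightarrow> dominant_on (insert j A) z \<Longrightarrow> f z = 0"
    and "z \<in> closed_orthant" "dominant_on A z"
  shows "f z = 0"
proof -
  define q where "q = (\<chi> i. if i = j then 0 else z $ i)"
  define L where "L = (\<lambda>t. \<chi> i. if i = j then t else z $ i)"
  have L_line: "L t = q + t *s axis j 1" for t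
    by (simp add: L_def q_def vec_eq_iff axis_def)
  have orthant: "L t \<in> closed_orthant" if "0 \<le> Re t" for t
    using assms(9) that by (auto simp: closed_orthant_def L_def)
  have norm1_L: "norm1 (L t) = norm1 q + norm t" for t
  proof -
    have "norm (L t $ i) = norm (q $ i) + (if i = j then norm t else 0)" for i
      by (simp add: L_def q_def)
    then show ?thesis by (simp add: norm1_def sum.distrib)
  qed
  obtain m0 where m0: "\<And>n. dominant_on (insert j A) (L (of_nat (m0 + n)))"
    using dominant_on_insert_large[OF assms(10,7)] unfolding L_def by blast
  have "f (L (z $ j)) = 0"
  proof (rule carlson_closed_halfplane[where g = "\<lambda>t. f (L t)"])
    show "open {t. L t \<in> U}" using open_line_preimage[OF assms(1)] by (simp add: L_line)
    show "{t. 0 \<le> Re t} \<subseteq> {t. L t \<in> U}" using orthant assms(2) by auto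
    show "(\<lambda>t. f (L t)) holomorphic_on {t. L t \<in> U}"
      using holomorphic_n_on_line[OF assms(3)] by (simp add: L_line)
    show "norm (f (L t)) \<le> C * exp (c * norm1 q) * exp (c * norm t)" if "0 \<le> Re t" "R \<le> norm t" for t
    proof -
      have "norm t \<le> norm (L t)"
        using Finite_Cartesian_Product.norm_nth_le[of "L t" j] by (simp add: L_def)
      then have "norm (f (L t)) \<le> C * exp (c * norm1 (L t))" using that orthant by (intro growth) auto
      then show ?thesis by (simp add: norm1_L distrib_left exp_add mult.assoc)
    qed
    show "f (L (of_nat (m0 + n))) = 0" for n using m0 orthant by (intro vanish) auto
    show "0 \<le> Re (z $ j)" using assms(9) by (simp add: closed_orthant_def)
  qed (use assms(4,5) in auto)
  moreover have "L (z $ j) = z" by (simp add: L_def vec_eq_iff)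
  ultimately show ?thesis by simp
qed

lemma holomorphic_n_vanishes_on_closed_orthant:
  fixes f :: "(complex, 'n::{finite,linorder}) vec \<Rightarrow> complex"
  assumes "open U" "closed_orthant \<subseteq> U" "holomorphic_n f U" "0 \<le> c" "c < pi"
    and "\<And>z. z \<in> closed_orthant \<Longrightarrow> R \<le> norm z \<Longrightarrow> norm (f z) \<le> C * exp (c * norm1 z)"
    and "\<And>w. w \<in> dominant_weights \<Longrightarrow> f w = 0"
    and "z \<in> closed_orthant"
  shows "f z = 0"
proof -
  \<comment> \<open>\<open>B\<close> is the initial segment of free coordinates; the step frees its largest element.\<close>
  have "\<forall>z\<in>closed_orthant. dominant_on (- B) z \<longrightarrow> f z = 0"
    if "finite B" "\<forall>i\<in>B. {..i} \<subseteq> B" for B :: "'n set"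
    using that
  proof (induction B rule: finite_remove_induct)
    case empty
    then show ?case using assms(7) dominant_on_UNIV_imp_dominant_weight by auto
  next
    case (remove B)
    define j where "j = Max B"
    have "j \<in> B" using remove.hyps by (simp add: j_def)
    have "i < j" if "i \<in> B - {j}" for i
      using that remove.hyps by (auto simp: j_def order.strict_iff_order)
    then have "\<forall>i\<in>B - {j}. {..i} \<subseteq> B - {j}"
      using remove.prems by fastforce
    then have IH: "\<forall>z\<in>closed_orthant. dominant_on (insert j (- B)) z \<longrightarrow> f z = 0"
      using remove.IH[OF \<open>j \<in> B\<close>] \<open>j \<in> B\<close> by (simp add: Compl_insert[symmetric] insert_absorb)
    have "\<forall>i\<in>- B. j < i"
      using remove.prems \<open>j \<in> B\<close> by (metis ComplD atMost_iff not_less subsetD)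
    then show ?case
      using vanishes_on_dominant_on_of_insert[OF assms(1-6)] IH by blast
  qed
  from this[of UNIV] show ?thesis using assms(8) by (simp add: dominant_on_def)
qed

theorem lemma5p2:
  fixes U :: "(complex, 'n::{finite,linorder}) vec set"
    and f :: "(complex, 'n) vec \<Rightarrow> complex"
    and c :: real
  assumes "open U"
    and "closed_orthant \<subseteq> U"
    and "holomorphic_n f U"
    and "c < pi"
    and "\<exists>C R. \<forall>z\<in>closed_orthant. norm z \<ge> R \<longrightarrow> norm (f z) \<le> C * exp (c * norm1 z)"
    and "\<forall>w\<in>dominant_weights. f w = 0"
  shows "\<forall>z\<in>connected_component_set U 0. f z = 0"
proof -
  obtain C R where bound: "\<And>z. z \<in> closed_orthant \<Longrightarrow> R \<le> norm z \<Longrightarrow> norm (f z) \<le> C * exp (c * norm1 z)"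
    using assms(5) by blast
  have growth: "norm (f z) \<le> max C 0 * exp (max c 0 * norm1 z)"
    if "z \<in> closed_orthant" "R \<le> norm z" for z
  proof -
    have "0 \<le> norm1 z" by (simp add: norm1_def sum_nonneg)
    then have "C * exp (c * norm1 z) \<le> max C 0 * exp (max c 0 * norm1 z)"
      by (intro mult_mono) (auto intro: mult_right_mono)
    with bound[OF that] show ?thesis by linarith
  qed
  have orthant: "f z = 0" if "z \<in> closed_orthant" for z
    by (rule holomorphic_n_vanishes_on_closed_orthant[OF assms(1-3) _ _ growth _ that])
      (use assms(4,6) in auto)
  have "ball (\<chi> i. 1) 1 \<subseteq> connected_component_set U 0"
    using ball_subset_closed_orthant closed_orthant_subset_connected_component[OF assms(2)]
    by (rule order_trans)
  moreover have "f w = 0" if "w \<in> ball (\<chi> i. 1) 1" for w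
    using orthant ball_subset_closed_orthant that by blast
  ultimately show ?thesis
    using holomorphic_n_identity[OF assms(3) open_connected_component[OF assms(1)]
        connected_connected_component connected_component_subset zero_less_one]
    by blast
qed

end
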